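(* Let $d\in\{2,3\}$, $K(x)=\gamma_0\frac{x}{|x|^d}$ with $\gamma_0\in\{1,-1\}$, and $\alpha\in[1,\infty)$. Set $\beta=1+\frac1\alpha$ and define \[ \psi_\alpha(\tau)=\begin{cases}\tau|\ln\tau|^\beta,&\tau\in[0,1/9],\\ \frac19(\ln 9)^\beta,&\tau\ge1/9.\end{cases} \] Then there exists $C=C(\alpha)>0$ such that for all $g\in L_{\phi_\alpha}(\mathbb{R}^d)\cap L^1(\mathbb{R}^d)$ and all $x,y\in\mathbb{R}^d$, \[ \int_{\mathbb{R}^d}|K(x-z)-K(y-z)||g(z)|\,dz\le C\big(\|g\|_{L_{\phi_\alpha}}+\|g\|_{L^1}\big)\psi_\alpha(|x-y|). \]
   Context: $\phi_\alpha(\tau)=\exp(\tau^\alpha)-1$, and $L_{\phi_\alpha}(\mathbb{R}^d)$ is the Orlicz space with Luxemburg norm $\|f\|_{L_{\phi_\alpha}}=\inf\{\lambda>0:\int_{\mathbb{R}^d}\phi_\alpha(|f(x)|/\lambda)\,dx<1\}$. *)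

theory Defs
  imports "HOL-Analysis.Analysis"
begin

definition phi_alpha :: "real \<Rightarrow> real \<Rightarrow> real" where
  "phi_alpha \<alpha> \<tau> = exp (\<tau> powr \<alpha>) - 1"

definition orlicz_space :: "(real \<Rightarrow> real) \<Rightarrow> ('a::euclidean_space \<Rightarrow> real) set" where
  "orlicz_space \<Phi> = {f. f \<in> borel_measurable lebesgue \<and>
     (\<exists>c>0. (\<integral>\<^sup>+ x. ennreal (\<Phi> (\<bar>f x\<bar> / c)) \<partial>lebesgue) < \<infinity>)}"

definition lux_norm :: "(real \<Rightarrow> real) \<Rightarrow> ('a::euclidean_space \<Rightarrow> real) \<Rightarrow> real" where
  "lux_norm \<Phi> f = Inf {c. c > 0 \<and> (\<integral>\<^sup>+ x. ennreal (\<Phi> (\<bar>f x\<bar> / c)) \<partial>lebesgue) < 1}"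

definition kernK :: "real \<Rightarrow> 'a::euclidean_space \<Rightarrow> 'a" where
  "kernK \<gamma>0 x = (\<gamma>0 / norm x ^ DIM('a)) *\<^sub>R x"

definition psi_alpha :: "real \<Rightarrow> real \<Rightarrow> real" where
  "psi_alpha \<alpha> \<tau> = (if \<tau> \<le> 1/9 then \<tau> * \<bar>ln \<tau>\<bar> powr (1 + 1/\<alpha>)
                      else (1/9) * (ln 9) powr (1 + 1/\<alpha>))"

end

theory Submission
  imports Defs
begin

text \<open>Write \<open>s = \<bar>x - y\<bar>\<close>. Up to a constant, \<open>\<bar>K(x - z) - K(y - z)\<bar>\<close> is at most
  \<open>w(\<bar>x - z\<bar>) + w(\<bar>y - z\<bar>)\<close> with \<open>w(r) = min(r\<^sup>1\<^sup>-\<^sup>d, s r\<^sup>-\<^sup>d)\<close>. Outside the unit ball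
  \<open>w \<le> s\<close>, which gives \<open>s \<parallel>g\<parallel>\<^sub>1\<close>. Inside, split into dyadic shells \<open>2\<^sup>-\<^sup>j\<^sup>-\<^sup>1 \<le> r < 2\<^sup>-\<^sup>j\<close>; for every
  \<open>\<lambda>\<close> with \<open>\<integral>\<phi>\<^sub>\<alpha>(\<bar>g\<bar>/\<lambda>) \<le> 1\<close> the Young-type inequality
  \<open>ab \<le> \<phi>\<^sub>\<alpha>(a) + b(8 + 2 ln(1 + b)\<^sup>1\<^sup>/\<^sup>\<alpha>)\<close> bounds \<open>\<integral>\<^sub>B\<bar>g\<bar>\<close> by \<open>\<lambda>\<bar>B\<bar>(1 + ln(1/\<bar>B\<bar>)\<^sup>1\<^sup>/\<^sup>\<alpha>)\<close>
  on each ball \<open>B\<close> of radius \<open>2\<^sup>-\<^sup>j\<close>. On the first \<open>N \<approx> log\<^sub>2(1/s)\<close> shells the weight is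
  \<open>s r\<^sup>-\<^sup>d\<close> and the shells contribute \<open>\<lambda> s N\<^sup>1\<^sup>+\<^sup>1\<^sup>/\<^sup>\<alpha>\<close>; on the remaining ones the weight is
  \<open>r\<^sup>1\<^sup>-\<^sup>d\<close> and they form a geometric tail of order \<open>\<lambda> N 2\<^sup>-\<^sup>N \<approx> \<lambda> s N\<close>. Altogether this is
  \<open>\<lambda> \<psi>\<^sub>\<alpha>(s)\<close>, and the infimum over admissible \<open>\<lambda>\<close> is the Luxemburg norm.\<close>

lemma powr_le_one_plus:
  fixes t p :: real
  assumes "0 \<le> t" "0 < p" "p \<le> 1"
  shows "t powr p \<le> 1 + t"
proof (cases "t \<le> 1")
  case True
  then have "t powr p \<le> 1" using assms by (simp add: powr_le1)
  then show ?thesis using assms by linarith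
next
  case False
  then have "t powr p \<le> t powr 1" using assms by (intro powr_mono) auto
  then show ?thesis using False by simp
qed

lemma ln_one_plus_le_half:
  fixes a :: real
  assumes "8 \<le> a"
  shows "ln (1 + a) \<le> a / 2"
proof -
  have "(1 + a/4)^2 \<le> exp (a/4)^2"
    using exp_ge_add_one_self[of "a/4"] assms by (intro power_mono) auto
  also have "\<dots> = exp (a/2)" by (simp add: power2_eq_square exp_add[symmetric])
  finally have exp_ge: "(1 + a/4)^2 \<le> exp (a/2)" .
  have "a * 8 \<le> a * a" using assms by (intro mult_left_mono) auto
  then have "1 + a \<le> (1 + a/4)^2" by (simp add: power2_eq_square algebra_simps)
  then have "ln (1 + a) \<le> ln (exp (a/2))" using exp_ge assms by (intro ln_mono) auto
  then show ?thesis by simp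
qed

lemma phi_alpha_nonneg: "0 \<le> t \<Longrightarrow> 0 \<le> phi_alpha \<alpha> t"
  unfolding phi_alpha_def by simp

lemma young_phi_alpha:
  fixes a b \<alpha> :: real
  assumes a: "0 \<le> a" and b: "0 \<le> b" and \<alpha>: "1 \<le> \<alpha>"
  shows "a * b \<le> phi_alpha \<alpha> a + b * (8 + 2 * ln (1 + b) powr (1/\<alpha>))"
proof -
  have phi: "0 \<le> phi_alpha \<alpha> a" using a by (rule phi_alpha_nonneg)
  define R where "R = b * (8 + 2 * ln (1 + b) powr (1/\<alpha>))"
  have R: "8 * b \<le> R" unfolding R_def using b by (simp add: algebra_simps)
  consider "a \<le> 8" | "a * b \<le> phi_alpha \<alpha> a" | "8 < a" "phi_alpha \<alpha> a < a * b" by linarith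
  then have "a * b \<le> phi_alpha \<alpha> a + R"
  proof cases
    case 1
    then have "a * b \<le> 8 * b" using b by (rule mult_right_mono)
    then show ?thesis using phi R by linarith
  next
    case 2
    then show ?thesis using R b by linarith
  next
    case 3
    \<comment> \<open>\<open>exp (a\<^sup>\<alpha>) < (1 + a)(1 + b)\<close> and \<open>ln (1 + a) \<le> a\<^sup>\<alpha>/2\<close> force \<open>a\<^sup>\<alpha> < 2 ln (1 + b)\<close>\<close>
    have "1 + a * b \<le> (1 + a) * (1 + b)" using a b by (simp add: algebra_simps)
    moreover have "exp (a powr \<alpha>) < 1 + a * b" using 3 unfolding phi_alpha_def by simp
    ultimately have "exp (a powr \<alpha>) < (1 + a) * (1 + b)" by linarith
    then have "ln (exp (a powr \<alpha>)) < ln ((1 + a) * (1 + b))"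
      using a b by (subst ln_less_cancel_iff) auto
    then have "a powr \<alpha> < ln (1 + a) + ln (1 + b)" using a b by (simp add: ln_mult)
    moreover have "a \<le> a powr \<alpha>" using powr_mono[of 1 \<alpha> a] 3 \<alpha> by simp
    ultimately have "a powr \<alpha> < 2 * ln (1 + b)" using ln_one_plus_le_half[of a] 3 by linarith
    then have "(a powr \<alpha>) powr (1/\<alpha>) \<le> (2 * ln (1 + b)) powr (1/\<alpha>)"
      using \<alpha> by (intro powr_mono2) auto
    also have "\<dots> = 2 powr (1/\<alpha>) * ln (1 + b) powr (1/\<alpha>)" using b by (simp add: powr_mult)
    also have "\<dots> \<le> 2 * ln (1 + b) powr (1/\<alpha>)"
      using powr_mono[of "1/\<alpha>" 1 2] \<alpha> by (intro mult_right_mono) auto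
    finally have "a \<le> 2 * ln (1 + b) powr (1/\<alpha>)" using a \<alpha> by (simp add: powr_powr)
    then have "a * b \<le> b * (2 * ln (1 + b) powr (1/\<alpha>))" using b by (metis mult.commute mult_right_mono)
    moreover have "b * (2 * ln (1 + b) powr (1/\<alpha>)) \<le> R" unfolding R_def using b by (simp add: algebra_simps)
    ultimately show ?thesis using phi by linarith
  qed
  then show ?thesis unfolding R_def .
qed

lemma measurable_phi_alpha[measurable]:
  fixes g :: "'a::euclidean_space \<Rightarrow> real"
  assumes [measurable]: "g \<in> borel_measurable lebesgue"
  shows "(\<lambda>z. ennreal (phi_alpha \<alpha> (\<bar>g z\<bar> / l))) \<in> borel_measurable lebesgue"
  unfolding phi_alpha_def by measurable

lemma nn_integral_indicator_abs_le_orlicz: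
  fixes g :: "'a::euclidean_space \<Rightarrow> real"
  assumes [measurable]: "g \<in> borel_measurable lebesgue" "B \<in> sets lebesgue"
    and l: "0 < l" and \<alpha>: "1 \<le> \<alpha>"
    and phi_int: "(\<integral>\<^sup>+z. ennreal (phi_alpha \<alpha> (\<bar>g z\<bar> / l)) \<partial>lebesgue) \<le> 1"
    and B: "emeasure lebesgue B = ennreal m" and m: "0 < m"
  shows "(\<integral>\<^sup>+z. indicator B z * ennreal \<bar>g z\<bar> \<partial>lebesgue)
          \<le> ennreal (l * m * (9 + 2 * ln (1 + 1/m) powr (1/\<alpha>)))"
proof -
  define G where "G = 8 + 2 * ln (1 + 1/m) powr (1/\<alpha>)"
  have G: "0 \<le> G" unfolding G_def by simp
  have pointwise: "indicator B z * ennreal \<bar>g z\<bar> \<le>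
      ennreal (l * m) * ennreal (phi_alpha \<alpha> (\<bar>g z\<bar> / l)) + ennreal (l * G) * indicator B z" for z
  proof (cases "z \<in> B")
    case True
    have "\<bar>g z\<bar> = (l * m) * ((\<bar>g z\<bar> / l) * (1/m))" using l m by simp
    also have "\<dots> \<le> (l * m) * (phi_alpha \<alpha> (\<bar>g z\<bar> / l) + (1/m) * G)"
      using young_phi_alpha[of "\<bar>g z\<bar> / l" "1/m" \<alpha>] l m \<alpha> unfolding G_def
      by (intro mult_left_mono) auto
    also have "\<dots> = (l * m) * phi_alpha \<alpha> (\<bar>g z\<bar> / l) + l * G" using m by (simp add: algebra_simps)
    finally show ?thesis
      using True l m G phi_alpha_nonneg[of "\<bar>g z\<bar> / l" \<alpha>]
      by (simp add: ennreal_mult'[symmetric] ennreal_plus[symmetric] del: ennreal_plus)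
  qed simp
  have "(\<integral>\<^sup>+z. indicator B z * ennreal \<bar>g z\<bar> \<partial>lebesgue) \<le>
      (\<integral>\<^sup>+z. ennreal (l * m) * ennreal (phi_alpha \<alpha> (\<bar>g z\<bar> / l)) + ennreal (l * G) * indicator B z \<partial>lebesgue)"
    by (intro nn_integral_mono pointwise)
  also have "\<dots> = ennreal (l * m) * (\<integral>\<^sup>+z. ennreal (phi_alpha \<alpha> (\<bar>g z\<bar> / l)) \<partial>lebesgue)
       + ennreal (l * G) * emeasure lebesgue B"
    by (subst nn_integral_add) (auto simp: nn_integral_cmult)
  also have "\<dots> \<le> ennreal (l * m) * 1 + ennreal (l * G) * ennreal m"
    using phi_int B by (intro add_mono mult_left_mono) auto
  also have "\<dots> = ennreal (l * m * (1 + G))" using l m G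
    by (simp add: ennreal_mult'[symmetric] ennreal_plus[symmetric] algebra_simps del: ennreal_plus)
  finally show ?thesis unfolding G_def by (simp add: add.assoc)
qed

lemma phi_alpha_divide_le:
  fixes t \<alpha> :: real
  assumes t: "0 \<le> t" and \<alpha>: "1 \<le> \<alpha>" and n: "1 \<le> n"
  shows "phi_alpha \<alpha> (t / real n) \<le> phi_alpha \<alpha> t / real n"
proof -
  define u v where "u = t powr \<alpha>" and "v = exp (u / real n) - 1"
  have nr: "1 \<le> real n" using n by simp
  have u: "0 \<le> u" unfolding u_def by simp
  then have v: "0 \<le> v" unfolding v_def using nr by simp
  have "(t / real n) powr \<alpha> = u / real n powr \<alpha>" unfolding u_def using t nr by (simp add: powr_divide)
  also have "\<dots> \<le> u / real n" using nr \<alpha> u powr_mono[of 1 \<alpha> "real n"]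
    by (intro divide_left_mono) auto
  finally have phi_le: "phi_alpha \<alpha> (t / real n) \<le> v" unfolding phi_alpha_def v_def by simp
  have "1 + real n * v \<le> (1 + v) ^ n" using v by (intro Bernoulli_inequality) simp
  also have "\<dots> = exp u" unfolding v_def using nr by (simp add: exp_of_nat_mult[symmetric])
  finally have "v \<le> phi_alpha \<alpha> t / real n" using nr unfolding phi_alpha_def u_def by (simp add: field_simps)
  with phi_le show ?thesis by linarith
qed

lemma orlicz_space_admissible_scale:
  fixes g :: "'a::euclidean_space \<Rightarrow> real"
  assumes "g \<in> orlicz_space (phi_alpha \<alpha>)" and \<alpha>: "1 \<le> \<alpha>"
  shows "\<exists>c>0. (\<integral>\<^sup>+ x. ennreal (phi_alpha \<alpha> (\<bar>g x\<bar> / c)) \<partial>lebesgue) < 1"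
proof -
  from assms obtain c0 where c0: "0 < c0" and [measurable]: "g \<in> borel_measurable lebesgue"
    and fin: "(\<integral>\<^sup>+ x. ennreal (phi_alpha \<alpha> (\<bar>g x\<bar> / c0)) \<partial>lebesgue) < \<infinity>"
    unfolding orlicz_space_def by auto
  then obtain r where r: "0 \<le> r" "(\<integral>\<^sup>+ x. ennreal (phi_alpha \<alpha> (\<bar>g x\<bar> / c0)) \<partial>lebesgue) = ennreal r"
    using less_top_ennreal by auto
  obtain n :: nat where n: "r < real n" using reals_Archimedean2 by blast
  then have n1: "1 \<le> n" using r by (cases n) auto
  have "(\<integral>\<^sup>+ x. ennreal (phi_alpha \<alpha> (\<bar>g x\<bar> / (real n * c0))) \<partial>lebesgue)
      \<le> (\<integral>\<^sup>+ x. ennreal (1 / real n) * ennreal (phi_alpha \<alpha> (\<bar>g x\<bar> / c0)) \<partial>lebesgue)"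
  proof (intro nn_integral_mono)
    fix x
    have "phi_alpha \<alpha> (\<bar>g x\<bar> / (real n * c0)) \<le> phi_alpha \<alpha> (\<bar>g x\<bar> / c0) / real n"
      using phi_alpha_divide_le[OF _ \<alpha> n1, of "\<bar>g x\<bar> / c0"] c0 by (simp add: field_simps)
    also have "\<dots> = (1 / real n) * phi_alpha \<alpha> (\<bar>g x\<bar> / c0)" by simp
    finally show "ennreal (phi_alpha \<alpha> (\<bar>g x\<bar> / (real n * c0)))
        \<le> ennreal (1 / real n) * ennreal (phi_alpha \<alpha> (\<bar>g x\<bar> / c0))"
      using phi_alpha_nonneg[of "\<bar>g x\<bar> / c0" \<alpha>] c0 by (simp add: ennreal_mult[symmetric] ennreal_leI)
  qed
  also have "\<dots> = ennreal (r / real n)"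
    using r by (simp add: nn_integral_cmult ennreal_mult[symmetric])
  also have "\<dots> < 1" using n n1 r by (simp add: divide_less_eq)
  finally show ?thesis using c0 n1 by (intro exI[of _ "real n * c0"]) auto
qed

lemma ennreal_le_mult_Inf_add:
  fixes A :: ennreal and S :: "real set"
  assumes "S \<noteq> {}" "S \<subseteq> {0<..}" and C: "0 < C" and \<psi>: "0 \<le> \<psi>" and L: "0 \<le> L"
    and bound: "\<And>c. c \<in> S \<Longrightarrow> A \<le> ennreal (C * (c + L) * \<psi>)"
  shows "A \<le> ennreal (C * (Inf S + L) * \<psi>)"
proof (cases "\<psi> = 0")
  case True
  then show ?thesis using bound \<open>S \<noteq> {}\<close> by fastforce
next
  case False
  then have \<psi>: "0 < \<psi>" using \<psi> by simp
  obtain c0 where "c0 \<in> S" using assms(1) by auto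
  then have "A < top" using bound[of c0] by (simp add: le_less_trans)
  then obtain t where t: "0 \<le> t" "A = ennreal t" using less_top_ennreal by auto
  have "t / (C * \<psi>) - L \<le> c" if "c \<in> S" for c
  proof -
    have "0 < c" using that assms(2) by auto
    then have "0 \<le> C * (c + L) * \<psi>" using C \<psi> L by simp
    moreover have "ennreal t \<le> ennreal (C * (c + L) * \<psi>)" using bound[OF that] t by simp
    ultimately have "t \<le> C * (c + L) * \<psi>" by simp
    then show ?thesis using C \<psi> by (simp add: field_simps)
  qed
  then have "t / (C * \<psi>) - L \<le> Inf S" using assms(1) by (intro cInf_greatest) auto
  then have "t \<le> C * (Inf S + L) * \<psi>" using C \<psi> by (simp add: field_simps)
  then show ?thesis unfolding t(2) by (rule ennreal_leI)
qed

lemma dyadic_shell_exists: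
  fixes R r :: real
  assumes "0 < r" "r < R"
  shows "\<exists>j::nat. R / 2 ^ Suc j \<le> r \<and> r < R / 2 ^ j"
proof -
  obtain n :: nat where "R / r < 2 ^ n" using real_arch_pow[of 2 "R/r"] by auto
  then have n: "R / 2 ^ n < r" using assms by (simp add: field_simps)
  then have "n \<noteq> 0" using assms by (intro notI) simp
  then have ex: "\<exists>j. R / 2 ^ Suc j \<le> r" using n by (cases n) (auto intro: less_imp_le)
  define j where "j = (LEAST j. R / 2 ^ Suc j \<le> r)"
  have "R / 2 ^ Suc j \<le> r" unfolding j_def using LeastI_ex[OF ex] .
  moreover have "r < R / 2 ^ j"
  proof (cases j)
    case (Suc k)
    then have "\<not> R / 2 ^ Suc k \<le> r" unfolding j_def by (metis lessI not_less_Least)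
    then show ?thesis using Suc by simp
  qed (use assms in simp)
  ultimately show ?thesis by blast
qed

lemma sets_lebesgue_ball[measurable]: "ball (c::'a::euclidean_space) r \<in> sets lebesgue"
  by simp

lemma nn_integral_ball_le_dyadic_sum:
  fixes f :: "'a::euclidean_space \<Rightarrow> ennreal" and w :: "real \<Rightarrow> real"
  assumes f[measurable]: "f \<in> borel_measurable lebesgue"
    and R: "0 < R" and w_antimono: "\<And>r r'. 0 < r \<Longrightarrow> r \<le> r' \<Longrightarrow> w r' \<le> w r"
  shows "(\<integral>\<^sup>+z. indicator (ball c R) z * ennreal (w (dist c z)) * f z \<partial>lebesgue)
     \<le> (\<Sum>j. ennreal (w (R / 2 ^ Suc j)) * (\<integral>\<^sup>+z. indicator (ball c (R / 2 ^ j)) z * f z \<partial>lebesgue))"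
proof -
  have "AE z in lebesgue. z \<noteq> c" by (rule AE_completion[OF AE_lborel_singleton])
  then have "(\<integral>\<^sup>+z. indicator (ball c R) z * ennreal (w (dist c z)) * f z \<partial>lebesgue)
     \<le> (\<integral>\<^sup>+z. (\<Sum>j. ennreal (w (R / 2 ^ Suc j)) * (indicator (ball c (R / 2 ^ j)) z * f z)) \<partial>lebesgue)"
  proof (rule nn_integral_mono_AE[OF eventually_mono])
    fix z assume "z \<noteq> c"
    show "indicator (ball c R) z * ennreal (w (dist c z)) * f z
       \<le> (\<Sum>j. ennreal (w (R / 2 ^ Suc j)) * (indicator (ball c (R / 2 ^ j)) z * f z))"
    proof (cases "z \<in> ball c R")
      case True
      then obtain j where j: "R / 2 ^ Suc j \<le> dist c z" "dist c z < R / 2 ^ j"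
        using dyadic_shell_exists[of "dist c z" R] \<open>z \<noteq> c\<close> by auto
      have "w (dist c z) \<le> w (R / 2 ^ Suc j)" using j R by (intro w_antimono) auto
      then have "indicator (ball c R) z * ennreal (w (dist c z)) * f z
          \<le> ennreal (w (R / 2 ^ Suc j)) * (indicator (ball c (R / 2 ^ j)) z * f z)"
        using True j by (auto intro!: mult_right_mono ennreal_leI)
      also have "\<dots> \<le> (\<Sum>j. ennreal (w (R / 2 ^ Suc j)) * (indicator (ball c (R / 2 ^ j)) z * f z))"
        using sum_le_suminf[OF summableI, of "{j}"] by simp
      finally show ?thesis .
    qed simp
  qed
  also have "\<dots> = (\<Sum>j. (\<integral>\<^sup>+z. ennreal (w (R / 2 ^ Suc j)) * (indicator (ball c (R / 2 ^ j)) z * f z) \<partial>lebesgue))"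
    by (rule nn_integral_suminf) measurable
  also have "\<dots> = (\<Sum>j. ennreal (w (R / 2 ^ Suc j)) * (\<integral>\<^sup>+z. indicator (ball c (R / 2 ^ j)) z * f z \<partial>lebesgue))"
    by (simp add: nn_integral_cmult)
  finally show ?thesis .
qed

text \<open>With \<open>s = \<bar>a - b\<bar>\<close> and \<open>r = \<bar>a\<bar>\<close>, this is the size of \<open>\<bar>K a - K b\<bar>\<close>:
  \<open>r\<^sup>1\<^sup>-\<^sup>d\<close> close to the singularity, \<open>s r\<^sup>-\<^sup>d\<close> away from it.\<close>
definition kdiff_weight :: "nat \<Rightarrow> real \<Rightarrow> real \<Rightarrow> real" where
  "kdiff_weight d s r = min (1 / r ^ (d - 1)) (s / r ^ d)"

lemma kdiff_weight_nonneg: "0 \<le> s \<Longrightarrow> 0 \<le> r \<Longrightarrow> 0 \<le> kdiff_weight d s r"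
  unfolding kdiff_weight_def by simp

lemma kdiff_weight_antimono:
  assumes "0 < r" "r \<le> r'" "0 \<le> s"
  shows "kdiff_weight d s r' \<le> kdiff_weight d s r"
  unfolding kdiff_weight_def using assms
  by (intro min.mono divide_left_mono power_mono mult_pos_pos) auto

lemma measurable_kdiff_weight[measurable]:
  "(\<lambda>z. ennreal (kdiff_weight d s (dist (c::'a::euclidean_space) z))) \<in> borel_measurable lebesgue"
  by (rule measurable_completion) (unfold kdiff_weight_def, measurable)

lemma power_eq_mult_power_pred: "1 \<le> d \<Longrightarrow> (r::real) ^ d = r * r ^ (d - 1)"
  by (simp add: power_eq_if)

lemma kdiff_weight_eq_far:
  assumes "0 < s" "s \<le> r" "1 \<le> d"
  shows "kdiff_weight d s r = s / r ^ d"
proof -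
  have "s / r ^ d \<le> 1 / r ^ (d - 1)"
    using assms power_eq_mult_power_pred[OF assms(3), of r] by (simp add: divide_simps mult_right_mono)
  then show ?thesis unfolding kdiff_weight_def by simp
qed

lemma inverse_power_le_kdiff_weight:
  assumes "0 \<le> r" "r < 2 * s" "2 \<le> d"
  shows "1 / r ^ (d - 1) \<le> 2 * kdiff_weight d s r"
proof (cases "r = 0")
  case True
  then show ?thesis using assms by (simp add: kdiff_weight_def zero_power)
next
  case False
  then have "1 / r ^ (d - 1) \<le> 2 * (s / r ^ d)"
    using assms power_eq_mult_power_pred[of d r] by (simp add: divide_simps)
  moreover have "1 / r ^ (d - 1) \<le> 2 * (1 / r ^ (d - 1))" using False assms by (simp add: divide_simps)
  ultimately show ?thesis unfolding kdiff_weight_def by (simp add: min_def)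
qed

lemma kdiff_weight_le_ninth:
  assumes "0 \<le> r" "2 \<le> d"
  shows "kdiff_weight d s r \<le> 9 * kdiff_weight d (1/9) r + 1"
proof -
  have "1 / r ^ (d - 1) \<le> 9 * kdiff_weight d (1/9) r + 1"
  proof (cases "r \<le> 1")
    case True
    have "1 / r ^ (d - 1) \<le> 9 * kdiff_weight d (1/9) r"
    proof (cases "r = 0")
      case True
      then show ?thesis using assms by (simp add: kdiff_weight_def zero_power)
    next
      case False
      then have "1 / r ^ (d - 1) \<le> 9 * ((1/9) / r ^ d)"
        using True assms power_eq_mult_power_pred[of d r] by (simp add: divide_simps)
      moreover have "1 / r ^ (d - 1) \<le> 9 * (1 / r ^ (d - 1))" using False assms by (simp add: divide_simps)
      ultimately show ?thesis unfolding kdiff_weight_def by (simp add: min_def)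
    qed
    then show ?thesis by simp
  next
    case False
    then have "1 / r ^ (d - 1) \<le> 1" by (simp add: one_le_power)
    then show ?thesis using kdiff_weight_nonneg[of "1/9" r d] assms by linarith
  qed
  then show ?thesis unfolding kdiff_weight_def by linarith
qed

lemma kdiff_weight_dyadic_ball:
  assumes "0 < \<omega>" "0 < s" "1 \<le> d"
  shows "kdiff_weight d s (1 / 2 ^ Suc j) * (\<omega> * (1 / 2 ^ j) ^ d) \<le> \<omega> * 2 ^ d * s"
    and "kdiff_weight d s (1 / 2 ^ Suc j) * (\<omega> * (1 / 2 ^ j) ^ d) \<le> \<omega> * 2 ^ d * (1 / 2) ^ j"
proof -
  define \<rho> :: real where "\<rho> = 1 / 2 ^ j"
  have \<rho>: "0 < \<rho>" unfolding \<rho>_def by simp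
  have r: "1 / 2 ^ Suc j = \<rho> / 2" unfolding \<rho>_def by simp
  have "kdiff_weight d s (\<rho> / 2) * (\<omega> * \<rho> ^ d) \<le> s / (\<rho> / 2) ^ d * (\<omega> * \<rho> ^ d)"
    using assms \<rho> unfolding kdiff_weight_def by (intro mult_right_mono) auto
  also have "\<dots> = \<omega> * 2 ^ d * s" using \<rho> by (simp add: power_divide field_simps)
  finally show "kdiff_weight d s (1 / 2 ^ Suc j) * (\<omega> * (1 / 2 ^ j) ^ d) \<le> \<omega> * 2 ^ d * s"
    unfolding r \<rho>_def[symmetric] .
  have "kdiff_weight d s (\<rho> / 2) * (\<omega> * \<rho> ^ d) \<le> 1 / (\<rho> / 2) ^ (d - 1) * (\<omega> * \<rho> ^ d)"
    using assms \<rho> unfolding kdiff_weight_def by (intro mult_right_mono) auto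
  also have "\<dots> = \<omega> * 2 ^ (d - 1) * \<rho>"
    using \<rho> power_eq_mult_power_pred[OF assms(3), of \<rho>] by (simp add: power_divide field_simps)
  also have "\<dots> \<le> \<omega> * 2 ^ d * \<rho>"
    using assms \<rho> power_eq_mult_power_pred[OF assms(3), of 2] by simp
  finally show "kdiff_weight d s (1 / 2 ^ Suc j) * (\<omega> * (1 / 2 ^ j) ^ d) \<le> \<omega> * 2 ^ d * (1 / 2) ^ j"
    unfolding r \<rho>_def[symmetric] by (simp add: \<rho>_def power_one_over)
qed

lemma norm_kernK:
  assumes "2 \<le> DIM('a::euclidean_space)"
  shows "norm (kernK \<gamma> (a::'a)) = \<bar>\<gamma>\<bar> / norm a ^ (DIM('a) - 1)"
  using assms power_eq_mult_power_pred[of "DIM('a)" "norm a"]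
  by (cases "a = 0") (auto simp: kernK_def zero_power)

lemma abs_power_diff_le:
  fixes p q t :: real
  assumes "d \<in> {2, 3}" "0 < p" "p \<le> 2 * q" "\<bar>q - p\<bar> \<le> t"
  shows "\<bar>q ^ d - p ^ d\<bar> \<le> 7 * t * q ^ (d - 1)"
proof -
  have q: "0 < q" using assms by simp
  have t: "0 \<le> t" using assms(4) by simp
  consider "d = 2" | "d = 3" using assms(1) by auto
  then show ?thesis
  proof cases
    case 1
    have "q ^ 2 - p ^ 2 = (q - p) * (q + p)" by (simp add: power2_eq_square algebra_simps)
    then have "\<bar>q ^ 2 - p ^ 2\<bar> = \<bar>q - p\<bar> * (q + p)" using q assms by (simp add: abs_mult)
    also have "\<dots> \<le> t * (3 * q)" using assms q by (intro mult_mono) auto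
    finally show ?thesis using 1 t q by simp
  next
    case 2
    have "q ^ 3 - p ^ 3 = (q - p) * (q*q + q*p + p*p)" by (simp add: power3_eq_cube algebra_simps)
    moreover have "0 < q*q + q*p + p*p" using q assms by (simp add: add_pos_pos)
    ultimately have "\<bar>q ^ 3 - p ^ 3\<bar> = \<bar>q - p\<bar> * (q*q + q*p + p*p)" by (simp add: abs_mult)
    also have "\<dots> \<le> t * (q*q + q*(2*q) + (2*q)*(2*q))"
      using assms q by (intro mult_mono add_mono) auto
    finally show ?thesis using 2 by (simp add: power2_eq_square algebra_simps)
  qed
qed

lemma norm_kernK_diff_far:
  fixes a b :: "'a::euclidean_space"
  assumes d: "DIM('a) \<in> {2, 3}" and \<gamma>: "\<bar>\<gamma>\<bar> = 1"
    and far: "2 * norm (a - b) \<le> norm a" "0 < norm (a - b)"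
  shows "norm (kernK \<gamma> a - kernK \<gamma> b) \<le> 8 * norm (a - b) / norm a ^ DIM('a)"
proof -
  define p q t n where "p = norm a" and "q = norm b" and "t = norm (a - b)" and "n = DIM('a)"
  have p: "0 < p" using far unfolding p_def by linarith
  have qp: "\<bar>q - p\<bar> \<le> t" unfolding p_def q_def t_def by (metis norm_triangle_ineq3 norm_minus_commute)
  then have p2q: "p \<le> 2 * q" using far unfolding p_def t_def by linarith
  then have q: "0 < q" using p by simp
  have n1: "1 \<le> n" unfolding n_def by simp
  have "kernK \<gamma> a - kernK \<gamma> b = \<gamma> *\<^sub>R ((1 / p ^ n) *\<^sub>R (a - b) + (1 / p ^ n - 1 / q ^ n) *\<^sub>R b)"
    unfolding kernK_def p_def q_def n_def by (simp add: algebra_simps scaleR_diff_right)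
  then have "norm (kernK \<gamma> a - kernK \<gamma> b) = norm ((1 / p ^ n) *\<^sub>R (a - b) + (1 / p ^ n - 1 / q ^ n) *\<^sub>R b)"
    using \<gamma> by simp
  also have "\<dots> \<le> norm ((1 / p ^ n) *\<^sub>R (a - b)) + norm ((1 / p ^ n - 1 / q ^ n) *\<^sub>R b)"
    by (rule norm_triangle_ineq)
  also have "\<dots> = t / p ^ n + \<bar>q ^ n - p ^ n\<bar> / (p ^ n * q ^ n) * q"
    using p q unfolding t_def q_def by (simp add: abs_div divide_simps abs_minus_commute)
  also have "\<bar>q ^ n - p ^ n\<bar> / (p ^ n * q ^ n) * q \<le> 7 * t * q ^ (n - 1) / (p ^ n * q ^ n) * q"
    using abs_power_diff_le[of n p q t] d p p2q qp q unfolding n_def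
    by (intro mult_right_mono divide_right_mono) auto
  also have "7 * t * q ^ (n - 1) / (p ^ n * q ^ n) * q = 7 * t / p ^ n"
    using p q power_eq_mult_power_pred[OF n1, of q] by (simp add: field_simps)
  finally show ?thesis unfolding p_def t_def n_def by simp
qed

lemma norm_kernK_diff_le:
  fixes a b :: "'a::euclidean_space"
  assumes d: "DIM('a) \<in> {2, 3}" and \<gamma>: "\<bar>\<gamma>\<bar> = 1" and t: "0 < norm (a - b)"
  shows "norm (kernK \<gamma> a - kernK \<gamma> b) \<le>
     8 * (kdiff_weight DIM('a) (norm (a - b)) (norm a) + kdiff_weight DIM('a) (norm (a - b)) (norm b))"
    (is "_ \<le> 8 * (?w a + ?w b)")
proof -
  have w: "0 \<le> ?w a" "0 \<le> ?w b" using t by (auto intro: kdiff_weight_nonneg)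
  have far: "norm (kernK \<gamma> u - kernK \<gamma> v) \<le> 8 * ?w u"
    if "2 * norm (a - b) \<le> norm u" "norm (u - v) = norm (a - b)" for u v
    using norm_kernK_diff_far[OF d \<gamma>, of u v] kdiff_weight_eq_far[of "norm (a - b)" "norm u" "DIM('a)"] that t
    by simp
  consider "2 * norm (a - b) \<le> norm a" | "2 * norm (a - b) \<le> norm b"
    | "norm a < 2 * norm (a - b)" "norm b < 2 * norm (a - b)" by linarith
  then show ?thesis
  proof cases
    case 1
    then show ?thesis using far[of a b] w by simp
  next
    case 2
    then show ?thesis using far[of b a] w by (simp add: norm_minus_commute)
  next
    case 3
    have "norm (kernK \<gamma> a - kernK \<gamma> b) \<le> norm (kernK \<gamma> a) + norm (kernK \<gamma> b)"
      by (rule norm_triangle_ineq4)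
    also have "\<dots> = 1 / norm a ^ (DIM('a) - 1) + 1 / norm b ^ (DIM('a) - 1)"
      using norm_kernK[of \<gamma> a] norm_kernK[of \<gamma> b] d \<gamma> by auto
    also have "\<dots> \<le> 2 * ?w a + 2 * ?w b"
      using 3 d by (intro add_mono inverse_power_le_kdiff_weight) auto
    finally show ?thesis using w by simp
  qed
qed

lemma ln_one_plus_inverse_dyadic:
  fixes \<omega> :: real
  assumes "0 < \<omega>"
  shows "ln (1 + 1 / (\<omega> * (1 / 2 ^ j) ^ d)) \<le> ln (1 + 1/\<omega>) + real j * (real d * ln 2)"
proof -
  have "1 + 1 / (\<omega> * (1 / 2 ^ j) ^ d) = 1 + 2 ^ (j * d) / \<omega>"
    by (simp add: power_one_over power_mult[symmetric] mult.commute)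
  also have "\<dots> \<le> (1 + 1/\<omega>) * 2 ^ (j * d)"
    using assms one_le_power[of 2 "j * d"] by (simp add: field_simps)
  finally have "ln (1 + 1 / (\<omega> * (1 / 2 ^ j) ^ d)) \<le> ln ((1 + 1/\<omega>) * 2 ^ (j * d))"
    using assms by (intro ln_mono) (auto intro: add_pos_nonneg)
  also have "\<dots> = ln (1 + 1/\<omega>) + real j * (real d * ln 2)"
  proof -
    have "0 < 1 + 1/\<omega>" using assms by (simp add: add_pos_nonneg)
    then show ?thesis by (simp add: ln_mult ln_realpow)
  qed
  finally show ?thesis .
qed

definition ball_factor_const :: "nat \<Rightarrow> real \<Rightarrow> real" where
  "ball_factor_const d \<omega> = 11 + 2 * ln (1 + 1/\<omega>) + 2 * real d * ln 2"

definition dyadic_sum_const :: "nat \<Rightarrow> real \<Rightarrow> real" where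
  "dyadic_sum_const d \<omega> = 17 * \<omega> * 2 ^ d * ball_factor_const d \<omega> / (ln 2)^2"

lemma ball_factor_const_nonneg: "0 < \<omega> \<Longrightarrow> 0 \<le> ball_factor_const d \<omega>"
  unfolding ball_factor_const_def by simp

lemma dyadic_sum_const_nonneg: "0 < \<omega> \<Longrightarrow> 0 \<le> dyadic_sum_const d \<omega>"
  unfolding dyadic_sum_const_def by (simp add: ball_factor_const_nonneg)

lemma orlicz_ball_factor_le:
  fixes \<omega> \<alpha> :: real
  assumes \<omega>: "0 < \<omega>" and \<alpha>: "1 \<le> \<alpha>"
  shows "9 + 2 * ln (1 + 1 / (\<omega> * (1 / 2 ^ j) ^ d)) powr (1/\<alpha>)
           \<le> ball_factor_const d \<omega> * (real j + 1) powr (1/\<alpha>)"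
proof -
  define B where "B = ln (1 + 1/\<omega>) + real d * ln 2"
  have B: "0 \<le> B" unfolding B_def using \<omega> by simp
  have J: "1 \<le> (real j + 1) powr (1/\<alpha>)" using \<alpha> by (intro ge_one_powr_ge_zero) auto
  have "ln (1 + 1/\<omega>) + real j * (real d * ln 2) \<le> B * (real j + 1)"
    using mult_nonneg_nonneg[of "real j" "ln (1 + 1/\<omega>)"] \<omega> unfolding B_def by (simp add: algebra_simps)
  then have "ln (1 + 1 / (\<omega> * (1 / 2 ^ j) ^ d)) \<le> B * (real j + 1)"
    using ln_one_plus_inverse_dyadic[OF \<omega>, of j d] by linarith
  then have "ln (1 + 1 / (\<omega> * (1 / 2 ^ j) ^ d)) powr (1/\<alpha>) \<le> (B * (real j + 1)) powr (1/\<alpha>)"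
    using \<omega> \<alpha> by (intro powr_mono2) auto
  also have "\<dots> = B powr (1/\<alpha>) * (real j + 1) powr (1/\<alpha>)" using B by (simp add: powr_mult)
  also have "\<dots> \<le> (1 + B) * (real j + 1) powr (1/\<alpha>)"
    using B \<alpha> by (intro mult_right_mono powr_le_one_plus) auto
  finally show ?thesis
    using J unfolding ball_factor_const_def B_def by (simp add: algebra_simps)
qed

lemma geometric_tail_le:
  fixes j N :: nat
  assumes "N \<le> j" "1 \<le> N"
  shows "(1/2::real) ^ j * (real j + 1) \<le> (real N + 1) * (1/2) ^ N * (3/4) ^ (j - N)"
proof -
  define t where "t = j - N"
  have j: "j = N + t" using assms unfolding t_def by simp
  have "real t / (real N + 1) \<le> real t / 2" using assms by (intro divide_left_mono) auto
  moreover have "1 + real t / 2 \<le> (3/2 :: real) ^ t" using Bernoulli_inequality[of "1/2" t] by simp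
  ultimately have "1 + real t / (real N + 1) \<le> (3/2) ^ t" by linarith
  have "real j + 1 = (real N + 1) * (1 + real t / (real N + 1))" using j by (simp add: field_simps)
  also have "\<dots> \<le> (real N + 1) * (3/2) ^ t" using \<open>1 + real t / (real N + 1) \<le> _\<close>
    by (intro mult_left_mono) auto
  finally have "real j + 1 \<le> (real N + 1) * (3/2) ^ t" .
  then have "(1/2::real) ^ j * (real j + 1) \<le> (1/2) ^ j * ((real N + 1) * (3/2) ^ t)"
    by (intro mult_left_mono) auto
  also have "\<dots> = (real N + 1) * (1/2) ^ N * (3/4) ^ t"
    unfolding j by (simp add: power_add power_mult_distrib[symmetric])
  finally show ?thesis unfolding t_def .
qed

lemma dyadic_cutoff_exists:
  fixes s :: real
  assumes s: "0 < s" "s \<le> 1/9"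
  obtains N :: nat where "1 \<le> N" "(1/2::real) ^ N \<le> 2 * s" "real N \<le> ln (1/s) / ln 2"
proof -
  define x where "x = ln (1/s) / ln 2"
  define N where "N = nat \<lfloor>x\<rfloor>"
  have "3 * ln 2 = ln (8::real)" using ln_realpow[of 2 3] by simp
  also have "\<dots> \<le> ln (1/s)" using s by (intro ln_mono) (auto simp: field_simps)
  finally have x3: "3 \<le> x" unfolding x_def by (simp add: field_simps)
  then have Nx: "1 \<le> N" "real N \<le> x" "x < real N + 1" unfolding N_def by linarith+
  have "1/s = exp (x * ln 2)" using s unfolding x_def by simp
  also have "\<dots> < exp ((real N + 1) * ln 2)" using Nx by simp
  also have "\<dots> = 2 ^ (N + 1)" using exp_of_nat_mult[of "N+1" "ln (2::real)"] by (simp add: algebra_simps)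
  finally have "(1/2::real) ^ N \<le> 2 * s" using s by (simp add: field_simps power_one_over)
  with Nx show ?thesis using that unfolding x_def by simp
qed

lemma dyadic_weight_term_le:
  fixes \<omega> \<alpha> s :: real
  assumes \<omega>: "0 < \<omega>" and \<alpha>: "1 \<le> \<alpha>" and d: "1 \<le> d" and s: "0 < s" and N: "1 \<le> N"
  defines "X \<equiv> \<omega> * 2 ^ d * ball_factor_const d \<omega>"
  shows "kdiff_weight d s (1 / 2 ^ Suc j) * (\<omega> * (1 / 2 ^ j) ^ d)
           * (9 + 2 * ln (1 + 1 / (\<omega> * (1 / 2 ^ j) ^ d)) powr (1/\<alpha>))
         \<le> (if j < N then X * (s * real N powr (1/\<alpha>))
            else X * ((real N + 1) * (1/2) ^ N) * (3/4) ^ (j - N))"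
proof -
  define W where "W = kdiff_weight d s (1 / 2 ^ Suc j) * (\<omega> * (1 / 2 ^ j) ^ d)"
  define F where "F = 9 + 2 * ln (1 + 1 / (\<omega> * (1 / 2 ^ j) ^ d)) powr (1/\<alpha>)"
  define K where "K = ball_factor_const d \<omega>"
  have F0: "0 \<le> F" unfolding F_def by simp
  have K0: "0 \<le> K" unfolding K_def using \<omega> by (rule ball_factor_const_nonneg)
  have F: "F \<le> K * (real j + 1) powr (1/\<alpha>)"
    unfolding F_def K_def using \<omega> \<alpha> by (rule orlicz_ball_factor_le)
  show ?thesis
  proof (cases "j < N")
    case True
    have "(real j + 1) powr (1/\<alpha>) \<le> real N powr (1/\<alpha>)" using True \<alpha> by (intro powr_mono2) auto
    then have "K * (real j + 1) powr (1/\<alpha>) \<le> K * real N powr (1/\<alpha>)" using K0 by (rule mult_left_mono)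
    then have "F \<le> K * real N powr (1/\<alpha>)" using F by linarith
    then have "W * F \<le> (\<omega> * 2 ^ d * s) * (K * real N powr (1/\<alpha>))"
      using kdiff_weight_dyadic_ball(1)[OF \<omega> s d, of j] F0 s \<omega> unfolding W_def[symmetric]
      by (intro mult_mono) auto
    then show ?thesis using True unfolding W_def F_def K_def X_def by (simp add: algebra_simps)
  next
    case False
    have "(real j + 1) powr (1/\<alpha>) \<le> (real j + 1) powr 1" using \<alpha> by (intro powr_mono) auto
    then have "K * (real j + 1) powr (1/\<alpha>) \<le> K * (real j + 1)" using K0 by (simp add: mult_left_mono)
    then have "F \<le> K * (real j + 1)" using F by linarith
    then have "W * F \<le> (\<omega> * 2 ^ d * (1/2) ^ j) * (K * (real j + 1))"
      using kdiff_weight_dyadic_ball(2)[OF \<omega> s d, of j] F0 s \<omega> unfolding W_def[symmetric]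
      by (intro mult_mono) auto
    also have "\<dots> = \<omega> * 2 ^ d * K * ((1/2) ^ j * (real j + 1))" by (simp add: algebra_simps)
    also have "\<dots> \<le> \<omega> * 2 ^ d * K * ((real N + 1) * (1/2) ^ N * (3/4) ^ (j - N))"
      using geometric_tail_le[of N j] False N \<omega> K0 by (intro mult_left_mono) auto
    finally show ?thesis using False unfolding W_def F_def K_def X_def by (simp add: algebra_simps)
  qed
qed

lemma suminf_ennreal_cutoff_geometric:
  fixes P Q :: real
  assumes "0 \<le> P" "0 \<le> Q"
  shows "(\<Sum>j. ennreal (if j < N then P else Q * (3/4) ^ (j - N))) = ennreal (real N * P + 4 * Q)"
proof -
  define u where "u = (\<lambda>j. if j < N then P else Q * (3/4) ^ (j - N))"
  have shift: "(\<lambda>t. u (t + N)) = (\<lambda>t. Q * (3/4) ^ t)" unfolding u_def by auto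
  have "summable (\<lambda>t. u (t + N))" unfolding shift by (intro summable_mult summable_geometric) simp
  then have u: "summable u" by (simp only: summable_iff_shift)
  have "(\<Sum>j. ennreal (u j)) = ennreal (\<Sum>j. u j)"
    using u by (intro suminf_ennreal2) (use assms in \<open>auto simp: u_def\<close>)
  also have "(\<Sum>j. u j) = (\<Sum>t. u (t + N)) + (\<Sum>j<N. u j)" using u by (rule suminf_split_initial_segment)
  also have "(\<Sum>t. u (t + N)) = 4 * Q" unfolding shift
    by (subst suminf_mult) (auto simp: suminf_geometric summable_geometric)
  also have "(\<Sum>j<N. u j) = real N * P" unfolding u_def by simp
  finally show ?thesis unfolding u_def by (simp add: add.commute)
qed

lemma dyadic_cutoff_total_le:
  fixes X \<alpha> s :: real
  assumes X: "0 \<le> X" and \<alpha>: "1 \<le> \<alpha>" and s: "0 < s" "s \<le> 1/9"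
    and N: "1 \<le> N" "(1/2::real) ^ N \<le> 2 * s" "real N \<le> ln (1/s) / ln 2"
  shows "real N * (X * (s * real N powr (1/\<alpha>))) + 4 * (X * ((real N + 1) * (1/2) ^ N))
           \<le> 17 * X / (ln 2)^2 * s * ln (1/s) powr (1 + 1/\<alpha>)"
proof -
  define \<beta> where "\<beta> = 1 + 1/\<alpha>"
  have \<beta>: "1 \<le> \<beta>" "\<beta> \<le> 2" unfolding \<beta>_def using \<alpha> by (auto simp: field_simps)
  have NR: "1 \<le> real N" using N by simp
  have "(real N + 1) * (1/2) ^ N \<le> (2 * real N) * (2 * s)" using NR N by (intro mult_mono) auto
  then have "X * ((real N + 1) * (1/2) ^ N) \<le> X * ((2 * real N) * (2 * s))"
    using X by (rule mult_left_mono)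
  then have "4 * (X * ((real N + 1) * (1/2) ^ N)) \<le> 16 * X * s * real N" by (simp add: algebra_simps)
  also have "\<dots> \<le> 16 * X * s * real N powr \<beta>"
    using NR \<beta> powr_mono[of 1 \<beta> "real N"] X s by (intro mult_left_mono) auto
  finally have "real N * (X * (s * real N powr (1/\<alpha>))) + 4 * (X * ((real N + 1) * (1/2) ^ N))
      \<le> 17 * X * s * real N powr \<beta>"
    using NR unfolding \<beta>_def by (simp add: powr_add algebra_simps)
  moreover have "real N powr \<beta> \<le> ln (1/s) powr \<beta> / (ln 2)^2"
  proof -
    have "real N powr \<beta> \<le> (ln (1/s) / ln 2) powr \<beta>" using N \<beta> by (intro powr_mono2) auto
    also have "\<dots> = ln (1/s) powr \<beta> / ln 2 powr \<beta>" using s by (simp add: powr_divide)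
    also have "ln 2 powr 2 \<le> ln (2::real) powr \<beta>" using \<beta> ln_2_less_1 by (intro powr_mono') auto
    then have "ln (1/s) powr \<beta> / ln 2 powr \<beta> \<le> ln (1/s) powr \<beta> / ln 2 powr 2"
      by (intro divide_left_mono) auto
    also have "\<dots> = ln (1/s) powr \<beta> / (ln 2)^2" by (simp add: powr_numeral)
    finally show ?thesis .
  qed
  then have "17 * X * s * real N powr \<beta> \<le> 17 * X * s * (ln (1/s) powr \<beta> / (ln 2)^2)"
    using X s by (intro mult_left_mono) auto
  ultimately show ?thesis unfolding \<beta>_def by (simp add: algebra_simps)
qed

lemma dyadic_weight_sum_le:
  fixes \<omega> \<alpha> s :: real
  assumes \<omega>: "0 < \<omega>" and \<alpha>: "1 \<le> \<alpha>" and d: "1 \<le> d" and s: "0 < s" "s \<le> 1/9"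
  shows "(\<Sum>j. ennreal (kdiff_weight d s (1 / 2 ^ Suc j) * (\<omega> * (1 / 2 ^ j) ^ d)
                        * (9 + 2 * ln (1 + 1 / (\<omega> * (1 / 2 ^ j) ^ d)) powr (1/\<alpha>))))
         \<le> ennreal (dyadic_sum_const d \<omega> * s * ln (1/s) powr (1 + 1/\<alpha>))"
proof -
  obtain N :: nat where N: "1 \<le> N" "(1/2::real) ^ N \<le> 2 * s" "real N \<le> ln (1/s) / ln 2"
    using dyadic_cutoff_exists[OF s] by blast
  define X where "X = \<omega> * 2 ^ d * ball_factor_const d \<omega>"
  have X: "0 \<le> X" unfolding X_def using \<omega> by (simp add: ball_factor_const_nonneg)
  have "(\<Sum>j. ennreal (kdiff_weight d s (1 / 2 ^ Suc j) * (\<omega> * (1 / 2 ^ j) ^ d)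
                        * (9 + 2 * ln (1 + 1 / (\<omega> * (1 / 2 ^ j) ^ d)) powr (1/\<alpha>))))
      \<le> (\<Sum>j. ennreal (if j < N then X * (s * real N powr (1/\<alpha>))
                      else X * ((real N + 1) * (1/2) ^ N) * (3/4) ^ (j - N)))"
    using dyadic_weight_term_le[OF \<omega> \<alpha> d s(1) N(1)] unfolding X_def
    by (intro suminf_le summableI ennreal_leI) auto
  also have "\<dots> = ennreal (real N * (X * (s * real N powr (1/\<alpha>))) + 4 * (X * ((real N + 1) * (1/2) ^ N)))"
    using X s by (intro suminf_ennreal_cutoff_geometric) auto
  also have "\<dots> \<le> ennreal (dyadic_sum_const d \<omega> * s * ln (1/s) powr (1 + 1/\<alpha>))"
    using dyadic_cutoff_total_le[OF X \<alpha> s N] unfolding dyadic_sum_const_def X_def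
    by (intro ennreal_leI) (simp add: algebra_simps)
  finally show ?thesis .
qed

lemma nn_integral_kdiff_weight_split:
  fixes g :: "'a::euclidean_space \<Rightarrow> real"
  assumes [measurable]: "g \<in> borel_measurable lebesgue" and s: "0 \<le> s"
  shows "(\<integral>\<^sup>+z. ennreal (kdiff_weight d s (dist c z)) * ennreal \<bar>g z\<bar> \<partial>lebesgue)
     \<le> (\<integral>\<^sup>+z. indicator (ball c 1) z * ennreal (kdiff_weight d s (dist c z)) * ennreal \<bar>g z\<bar> \<partial>lebesgue)
        + ennreal s * (\<integral>\<^sup>+z. ennreal \<bar>g z\<bar> \<partial>lebesgue)"
proof -
  have "ennreal (kdiff_weight d s (dist c z)) * ennreal \<bar>g z\<bar> \<le>
      indicator (ball c 1) z * ennreal (kdiff_weight d s (dist c z)) * ennreal \<bar>g z\<bar>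
      + ennreal s * ennreal \<bar>g z\<bar>" for z
  proof (cases "z \<in> ball c 1")
    case False
    then have "1 \<le> dist c z" by simp
    then have "kdiff_weight d s (dist c z) \<le> s"
      unfolding kdiff_weight_def using s
      by (simp add: min.coboundedI2 divide_le_eq one_le_power mult_le_cancel_left1)
    then show ?thesis using False by (simp add: mult_right_mono ennreal_leI)
  qed simp
  then have "(\<integral>\<^sup>+z. ennreal (kdiff_weight d s (dist c z)) * ennreal \<bar>g z\<bar> \<partial>lebesgue) \<le>
      (\<integral>\<^sup>+z. indicator (ball c 1) z * ennreal (kdiff_weight d s (dist c z)) * ennreal \<bar>g z\<bar>
              + ennreal s * ennreal \<bar>g z\<bar> \<partial>lebesgue)"
    by (intro nn_integral_mono)
  also have "\<dots> = (\<integral>\<^sup>+z. indicator (ball c 1) z * ennreal (kdiff_weight d s (dist c z)) * ennreal \<bar>g z\<bar> \<partial>lebesgue)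
      + ennreal s * (\<integral>\<^sup>+z. ennreal \<bar>g z\<bar> \<partial>lebesgue)"
    by (subst nn_integral_add) (auto simp: nn_integral_cmult)
  finally show ?thesis .
qed

definition kdiff_integral_const :: "nat \<Rightarrow> real" where
  "kdiff_integral_const d = dyadic_sum_const d (unit_ball_vol (real d))"

lemma kdiff_integral_const_nonneg: "0 \<le> kdiff_integral_const d"
  unfolding kdiff_integral_const_def by (simp add: dyadic_sum_const_nonneg)

lemma nn_integral_kdiff_weight_le:
  fixes g :: "'a::euclidean_space \<Rightarrow> real"
  assumes g[measurable]: "g \<in> borel_measurable lebesgue"
    and l: "0 < l" and \<alpha>: "1 \<le> \<alpha>"
    and phi_int: "(\<integral>\<^sup>+z. ennreal (phi_alpha \<alpha> (\<bar>g z\<bar> / l)) \<partial>lebesgue) \<le> 1"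
    and s: "0 < s" "s \<le> 1/9"
  shows "(\<integral>\<^sup>+z. ennreal (kdiff_weight DIM('a) s (dist c z)) * ennreal \<bar>g z\<bar> \<partial>lebesgue)
     \<le> ennreal (l * kdiff_integral_const DIM('a) * s * ln (1/s) powr (1 + 1/\<alpha>))
        + ennreal s * (\<integral>\<^sup>+z. ennreal \<bar>g z\<bar> \<partial>lebesgue)"
proof -
  define n \<omega> where "n = DIM('a)" and "\<omega> = unit_ball_vol (real DIM('a))"
  define m where "m j = \<omega> * (1 / 2 ^ j) ^ n" for j :: nat
  define W where "W j = kdiff_weight n s (1 / 2 ^ Suc j)" for j
  have \<omega>: "0 < \<omega>" unfolding \<omega>_def by simp
  have m: "0 < m j" for j unfolding m_def using \<omega> by simp
  have W: "0 \<le> W j" for j unfolding W_def using s by (simp add: kdiff_weight_nonneg)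
  have ball: "(\<integral>\<^sup>+z. indicator (ball c (1 / 2 ^ j)) z * ennreal \<bar>g z\<bar> \<partial>lebesgue)
      \<le> ennreal (l * (m j * (9 + 2 * ln (1 + 1 / m j) powr (1/\<alpha>))))" for j
    using nn_integral_indicator_abs_le_orlicz[OF g _ l \<alpha> phi_int, of "ball c (1 / 2 ^ j)" "m j"] m[of j]
    unfolding m_def \<omega>_def n_def by (simp add: emeasure_ball mult.assoc)
  have "(\<integral>\<^sup>+z. indicator (ball c 1) z * ennreal (kdiff_weight n s (dist c z)) * ennreal \<bar>g z\<bar> \<partial>lebesgue)
      \<le> (\<Sum>j. ennreal (W j) * (\<integral>\<^sup>+z. indicator (ball c (1 / 2 ^ j)) z * ennreal \<bar>g z\<bar> \<partial>lebesgue))"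
    using nn_integral_ball_le_dyadic_sum[of "\<lambda>z. ennreal \<bar>g z\<bar>" 1 "kdiff_weight n s" c]
      kdiff_weight_antimono s unfolding W_def by simp
  also have "\<dots> \<le> (\<Sum>j. ennreal l * ennreal (W j * m j * (9 + 2 * ln (1 + 1 / m j) powr (1/\<alpha>))))"
  proof (intro suminf_le summableI)
    fix j
    have "ennreal (W j) * (\<integral>\<^sup>+z. indicator (ball c (1 / 2 ^ j)) z * ennreal \<bar>g z\<bar> \<partial>lebesgue)
        \<le> ennreal (W j) * ennreal (l * (m j * (9 + 2 * ln (1 + 1 / m j) powr (1/\<alpha>))))"
      using ball by (rule mult_left_mono) simp
    also have "\<dots> = ennreal l * ennreal (W j * m j * (9 + 2 * ln (1 + 1 / m j) powr (1/\<alpha>)))"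
      using W[of j] m[of j] l by (simp add: ennreal_mult'[symmetric] mult_ac)
    finally show "ennreal (W j) * (\<integral>\<^sup>+z. indicator (ball c (1 / 2 ^ j)) z * ennreal \<bar>g z\<bar> \<partial>lebesgue)
        \<le> ennreal l * ennreal (W j * m j * (9 + 2 * ln (1 + 1 / m j) powr (1/\<alpha>)))" .
  qed
  also have "\<dots> \<le> ennreal l * ennreal (dyadic_sum_const n \<omega> * s * ln (1/s) powr (1 + 1/\<alpha>))"
    using dyadic_weight_sum_le[OF \<omega> \<alpha> _ s, of n] unfolding ennreal_suminf_cmult W_def m_def n_def
    by (intro mult_left_mono) auto
  also have "\<dots> = ennreal (l * kdiff_integral_const n * s * ln (1/s) powr (1 + 1/\<alpha>))"
    using l dyadic_sum_const_nonneg[OF \<omega>, of n] s unfolding kdiff_integral_const_def \<omega>_def n_def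
    by (simp add: ennreal_mult'[symmetric] mult_ac)
  finally show ?thesis
    using nn_integral_kdiff_weight_split[OF g, of s n c] s unfolding n_def
    by (meson add_right_mono order_trans less_imp_le)
qed

lemma nn_integral_two_centre_le:
  fixes f g :: "'a::euclidean_space \<Rightarrow> real" and x y :: 'a
  assumes g[measurable]: "g \<in> borel_measurable lebesgue" and g_int: "integrable lebesgue g"
    and l: "0 < l" and \<alpha>: "1 \<le> \<alpha>"
    and phi_int: "(\<integral>\<^sup>+z. ennreal (phi_alpha \<alpha> (\<bar>g z\<bar> / l)) \<partial>lebesgue) \<le> 1"
    and s: "0 < s" "s \<le> 1/9" and A: "0 \<le> A" and B: "0 \<le> B"
    and f_le: "\<And>z. f z \<le> A * (kdiff_weight DIM('a) s (dist x z) + kdiff_weight DIM('a) s (dist y z)) + B"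
  defines "L \<equiv> \<integral>z. \<bar>g z\<bar> \<partial>lebesgue"
  shows "(\<integral>\<^sup>+z. ennreal (f z * \<bar>g z\<bar>) \<partial>lebesgue)
     \<le> ennreal (2 * A * (l * kdiff_integral_const DIM('a) * s * ln (1/s) powr (1 + 1/\<alpha>) + s * L) + B * L)"
proof -
  define w where "w c z = kdiff_weight DIM('a) s (dist c z)" for c z :: 'a
  define T where "T = l * kdiff_integral_const DIM('a) * s * ln (1/s) powr (1 + 1/\<alpha>) + s * L"
  have w: "0 \<le> w c z" for c z unfolding w_def using s by (simp add: kdiff_weight_nonneg)
  have L: "0 \<le> L" "(\<integral>\<^sup>+z. ennreal \<bar>g z\<bar> \<partial>lebesgue) = ennreal L"
    unfolding L_def using g_int by (auto intro: nn_integral_eq_integral)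
  have T: "0 \<le> T" unfolding T_def using l s L(1) by (simp add: kdiff_integral_const_nonneg)
  have weight_int: "(\<integral>\<^sup>+z. ennreal (w c z) * ennreal \<bar>g z\<bar> \<partial>lebesgue) \<le> ennreal T" for c
    using nn_integral_kdiff_weight_le[OF g l \<alpha> phi_int s, of c] l s L kdiff_integral_const_nonneg
    unfolding w_def T_def by (simp add: ennreal_mult'[symmetric] ennreal_plus[symmetric] del: ennreal_plus)
  have "ennreal (f z * \<bar>g z\<bar>)
      \<le> ennreal A * (ennreal (w x z) * ennreal \<bar>g z\<bar>) + ennreal A * (ennreal (w y z) * ennreal \<bar>g z\<bar>)
        + ennreal B * ennreal \<bar>g z\<bar>" for z
  proof -
    have "f z * \<bar>g z\<bar> \<le> A * (w x z * \<bar>g z\<bar>) + A * (w y z * \<bar>g z\<bar>) + B * \<bar>g z\<bar>"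
      using mult_right_mono[OF f_le[of z], of "\<bar>g z\<bar>"] unfolding w_def by (simp add: algebra_simps)
    then show ?thesis
      using A B w[of x z] w[of y z] by (simp add: ennreal_mult'[symmetric] ennreal_plus[symmetric] del: ennreal_plus)
  qed
  then have "(\<integral>\<^sup>+z. ennreal (f z * \<bar>g z\<bar>) \<partial>lebesgue)
      \<le> (\<integral>\<^sup>+z. ennreal A * (ennreal (w x z) * ennreal \<bar>g z\<bar>) + ennreal A * (ennreal (w y z) * ennreal \<bar>g z\<bar>)
              + ennreal B * ennreal \<bar>g z\<bar> \<partial>lebesgue)"
    by (rule nn_integral_mono)
  also have "\<dots> = ennreal A * (\<integral>\<^sup>+z. ennreal (w x z) * ennreal \<bar>g z\<bar> \<partial>lebesgue)
        + ennreal A * (\<integral>\<^sup>+z. ennreal (w y z) * ennreal \<bar>g z\<bar> \<partial>lebesgue)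
        + ennreal B * (\<integral>\<^sup>+z. ennreal \<bar>g z\<bar> \<partial>lebesgue)"
    unfolding w_def by (subst nn_integral_add, measurable)+ (simp add: nn_integral_cmult)
  also have "\<dots> \<le> ennreal A * ennreal T + ennreal A * ennreal T + ennreal B * ennreal L"
    using weight_int L by (intro add_mono mult_left_mono) auto
  also have "\<dots> = ennreal (2 * A * T + B * L)"
    using A B T L by (simp add: ennreal_mult'[symmetric] ennreal_plus[symmetric] del: ennreal_plus)
  finally show ?thesis unfolding T_def .
qed

lemma one_le_ln_powr:
  fixes t \<beta> :: real
  assumes "3 \<le> t" "0 \<le> \<beta>"
  shows "1 \<le> ln t powr \<beta>"
proof -
  have "exp 1 \<le> t" using exp_le assms(1) by linarith
  then have "1 \<le> ln t" using assms by (simp add: ln_ge_iff)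
  then show ?thesis using assms(2) by (rule ge_one_powr_ge_zero)
qed

lemma mult_add_le_succ_mult_add:
  fixes \<kappa> l L P :: real
  assumes "0 \<le> \<kappa>" "0 \<le> l" "0 \<le> L" "1 \<le> P"
  shows "\<kappa> * l * P + L \<le> (\<kappa> + 1) * (l + L) * P"
proof -
  have "L \<le> L * P" "0 \<le> \<kappa> * L * P" "0 \<le> l * P" using assms mult_left_mono[of 1 P L] by auto
  moreover have "(\<kappa> + 1) * (l + L) * P = \<kappa> * l * P + \<kappa> * L * P + l * P + L * P"
    by (simp add: algebra_simps)
  ultimately show ?thesis by linarith
qed

lemma nn_integral_kernK_diff_le_near:
  fixes g :: "'a::euclidean_space \<Rightarrow> real" and x y :: 'a
  assumes d: "DIM('a) \<in> {2, 3}" and g[measurable]: "g \<in> borel_measurable lebesgue"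
    and g_int: "integrable lebesgue g" and l: "0 < l" and \<alpha>: "1 \<le> \<alpha>"
    and phi_int: "(\<integral>\<^sup>+z. ennreal (phi_alpha \<alpha> (\<bar>g z\<bar> / l)) \<partial>lebesgue) \<le> 1"
    and \<gamma>: "\<bar>\<gamma>\<bar> = 1"
    and xy: "0 < dist x y" "dist x y \<le> 1/9"
  defines "\<kappa> \<equiv> kdiff_integral_const DIM('a)" and "L \<equiv> \<integral>z. \<bar>g z\<bar> \<partial>lebesgue"
  shows "(\<integral>\<^sup>+z. ennreal (norm (kernK \<gamma> (x - z) - kernK \<gamma> (y - z)) * \<bar>g z\<bar>) \<partial>lebesgue)
     \<le> ennreal (288 * (\<kappa> + 1) * (l + L) * psi_alpha \<alpha> (dist x y))"
proof -
  define t P where "t = dist x y" and "P = ln (1/t) powr (1 + 1/\<alpha>)"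
  have t: "0 < t" "t \<le> 1/9" using xy unfolding t_def by auto
  have \<kappa>: "0 \<le> \<kappa>" unfolding \<kappa>_def by (rule kdiff_integral_const_nonneg)
  have L: "0 \<le> L" unfolding L_def by simp
  have P: "1 \<le> P" unfolding P_def using t \<alpha> by (intro one_le_ln_powr) (auto simp: field_simps)
  have psi: "psi_alpha \<alpha> t = t * P"
    using t unfolding psi_alpha_def P_def by (simp add: ln_div abs_if)
  have pointwise: "norm (kernK \<gamma> (x - z) - kernK \<gamma> (y - z))
      \<le> 8 * (kdiff_weight DIM('a) t (dist x z) + kdiff_weight DIM('a) t (dist y z))" for z
    using norm_kernK_diff_le[OF d \<gamma>, of "x - z" "y - z"] t unfolding t_def by (simp add: dist_norm)
  have bound: "(\<integral>\<^sup>+z. ennreal (norm (kernK \<gamma> (x - z) - kernK \<gamma> (y - z)) * \<bar>g z\<bar>) \<partial>lebesgue)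
      \<le> ennreal (2 * 8 * (l * \<kappa> * t * P + t * L) + 0 * L)"
    unfolding \<kappa>_def L_def P_def
    by (rule nn_integral_two_centre_le[OF g g_int l \<alpha> phi_int t]) (use pointwise in auto)
  have "16 * t * (\<kappa> * l * P + L) \<le> 16 * t * ((\<kappa> + 1) * (l + L) * P)"
    using mult_add_le_succ_mult_add[OF \<kappa> less_imp_le[OF l] L P] t by (intro mult_left_mono) auto
  also have "\<dots> \<le> 288 * t * ((\<kappa> + 1) * (l + L) * P)"
    using t \<kappa> l L P by (intro mult_right_mono) auto
  finally have "2 * 8 * (l * \<kappa> * t * P + t * L) + 0 * L \<le> 288 * (\<kappa> + 1) * (l + L) * (t * P)"
    by (simp add: algebra_simps)
  from order_trans[OF bound ennreal_leI[OF this]] show ?thesis unfolding t_def[symmetric] psi .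
qed

lemma nn_integral_kernK_diff_le_far:
  fixes g :: "'a::euclidean_space \<Rightarrow> real" and x y :: 'a
  assumes d: "DIM('a) \<in> {2, 3}" and g[measurable]: "g \<in> borel_measurable lebesgue"
    and g_int: "integrable lebesgue g" and l: "0 < l" and \<alpha>: "1 \<le> \<alpha>"
    and phi_int: "(\<integral>\<^sup>+z. ennreal (phi_alpha \<alpha> (\<bar>g z\<bar> / l)) \<partial>lebesgue) \<le> 1"
    and \<gamma>: "\<bar>\<gamma>\<bar> = 1"
    and xy: "1/9 < dist x y"
  defines "\<kappa> \<equiv> kdiff_integral_const DIM('a)" and "L \<equiv> \<integral>z. \<bar>g z\<bar> \<partial>lebesgue"
  shows "(\<integral>\<^sup>+z. ennreal (norm (kernK \<gamma> (x - z) - kernK \<gamma> (y - z)) * \<bar>g z\<bar>) \<partial>lebesgue)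
     \<le> ennreal (288 * (\<kappa> + 1) * (l + L) * psi_alpha \<alpha> (dist x y))"
proof -
  define P where "P = ln (1 / (1/9)) powr (1 + 1/\<alpha>)"
  have \<kappa>: "0 \<le> \<kappa>" unfolding \<kappa>_def by (rule kdiff_integral_const_nonneg)
  have L: "0 \<le> L" unfolding L_def by simp
  have P: "1 \<le> P" unfolding P_def using \<alpha> by (intro one_le_ln_powr) auto
  have psi: "psi_alpha \<alpha> (dist x y) = P / 9" using xy unfolding psi_alpha_def P_def by simp
  have "x \<noteq> y" using xy by auto
  then have pointwise: "norm (kernK \<gamma> (x - z) - kernK \<gamma> (y - z))
      \<le> 72 * (kdiff_weight DIM('a) (1/9) (dist x z) + kdiff_weight DIM('a) (1/9) (dist y z)) + 16" for z
    using norm_kernK_diff_le[OF d \<gamma>, of "x - z" "y - z"] d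
      kdiff_weight_le_ninth[of "dist x z" "DIM('a)" "dist x y"]
      kdiff_weight_le_ninth[of "dist y z" "DIM('a)" "dist x y"] by (auto simp: dist_norm)
  have bound: "(\<integral>\<^sup>+z. ennreal (norm (kernK \<gamma> (x - z) - kernK \<gamma> (y - z)) * \<bar>g z\<bar>) \<partial>lebesgue)
      \<le> ennreal (2 * 72 * (l * \<kappa> * (1/9) * P + (1/9) * L) + 16 * L)"
    unfolding \<kappa>_def L_def P_def
    by (rule nn_integral_two_centre_le[OF g g_int l \<alpha> phi_int]) (use pointwise in auto)
  have "2 * 72 * (l * \<kappa> * (1/9) * P + (1/9) * L) + 16 * L = 16 * (\<kappa> * l * P) + 32 * L"
    by (simp add: algebra_simps)
  also have "\<dots> \<le> 32 * (\<kappa> * l * P + L)" using \<kappa> l P by simp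
  also have "\<dots> \<le> 32 * ((\<kappa> + 1) * (l + L) * P)"
    using mult_add_le_succ_mult_add[OF \<kappa> less_imp_le[OF l] L P] by simp
  finally have "2 * 72 * (l * \<kappa> * (1/9) * P + (1/9) * L) + 16 * L \<le> 288 * (\<kappa> + 1) * (l + L) * (P / 9)"
    by (simp add: algebra_simps)
  from order_trans[OF bound ennreal_leI[OF this]] show ?thesis unfolding psi .
qed

lemma nn_integral_kernK_diff_le:
  fixes g :: "'a::euclidean_space \<Rightarrow> real" and x y :: 'a
  assumes d: "DIM('a) \<in> {2, 3}" and g[measurable]: "g \<in> borel_measurable lebesgue"
    and g_int: "integrable lebesgue g" and l: "0 < l" and \<alpha>: "1 \<le> \<alpha>"
    and phi_int: "(\<integral>\<^sup>+z. ennreal (phi_alpha \<alpha> (\<bar>g z\<bar> / l)) \<partial>lebesgue) \<le> 1"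
    and \<gamma>: "\<bar>\<gamma>\<bar> = 1"
  defines "\<kappa> \<equiv> kdiff_integral_const DIM('a)" and "L \<equiv> \<integral>z. \<bar>g z\<bar> \<partial>lebesgue"
  shows "(\<integral>\<^sup>+z. ennreal (norm (kernK \<gamma> (x - z) - kernK \<gamma> (y - z)) * \<bar>g z\<bar>) \<partial>lebesgue)
     \<le> ennreal (288 * (\<kappa> + 1) * (l + L) * psi_alpha \<alpha> (dist x y))"
proof (cases "x = y")
  case True
  then show ?thesis by simp
next
  case False
  then consider "0 < dist x y" "dist x y \<le> 1/9" | "1/9 < dist x y" by force
  then show ?thesis
    using nn_integral_kernK_diff_le_near[OF assms(1-7)] nn_integral_kernK_diff_le_far[OF assms(1-7)]
    unfolding \<kappa>_def L_def by cases blast+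
qed

theorem lemma2p1:
  fixes \<alpha> :: real
  assumes "DIM('a::euclidean_space) \<in> {2, 3}"
    and "\<alpha> \<ge> 1"
  shows "\<exists>C>0. \<forall>(\<gamma>0::real) (g::'a \<Rightarrow> real) (x::'a) (y::'a).
           \<gamma>0 \<in> {1, -1} \<longrightarrow> g \<in> orlicz_space (phi_alpha \<alpha>) \<longrightarrow> integrable lebesgue g \<longrightarrow>
           (\<integral>\<^sup>+ z. ennreal (norm (kernK \<gamma>0 (x - z) - kernK \<gamma>0 (y - z)) * \<bar>g z\<bar>) \<partial>lebesgue)
             \<le> ennreal (C * (lux_norm (phi_alpha \<alpha>) g + (\<integral>z. \<bar>g z\<bar> \<partial>lebesgue))
                          * psi_alpha \<alpha> (dist x y))"
proof -
  define C where "C = 288 * (kdiff_integral_const DIM('a) + 1)"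
  have C: "0 < C" unfolding C_def using kdiff_integral_const_nonneg[of "DIM('a)"] by simp
  show ?thesis
  proof (intro exI[of _ C] conjI allI impI C)
    fix \<gamma>0 :: real and g :: "'a \<Rightarrow> real" and x y :: 'a
    assume \<gamma>0: "\<gamma>0 \<in> {1, -1}" and orlicz: "g \<in> orlicz_space (phi_alpha \<alpha>)"
      and g_int: "integrable lebesgue g"
    then have g: "g \<in> borel_measurable lebesgue" unfolding orlicz_space_def by auto
    define S where "S = {c. c > 0 \<and> (\<integral>\<^sup>+ x. ennreal (phi_alpha \<alpha> (\<bar>g x\<bar> / c)) \<partial>lebesgue) < 1}"
    show "(\<integral>\<^sup>+ z. ennreal (norm (kernK \<gamma>0 (x - z) - kernK \<gamma>0 (y - z)) * \<bar>g z\<bar>) \<partial>lebesgue)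
        \<le> ennreal (C * (lux_norm (phi_alpha \<alpha>) g + (\<integral>z. \<bar>g z\<bar> \<partial>lebesgue)) * psi_alpha \<alpha> (dist x y))"
      unfolding lux_norm_def S_def[symmetric]
    proof (rule ennreal_le_mult_Inf_add)
      show "S \<noteq> {}" using orlicz_space_admissible_scale[OF orlicz assms(2)] unfolding S_def by auto
      fix c assume "c \<in> S"
      then show "(\<integral>\<^sup>+ z. ennreal (norm (kernK \<gamma>0 (x - z) - kernK \<gamma>0 (y - z)) * \<bar>g z\<bar>) \<partial>lebesgue)
          \<le> ennreal (C * (c + (\<integral>z. \<bar>g z\<bar> \<partial>lebesgue)) * psi_alpha \<alpha> (dist x y))"
        using nn_integral_kernK_diff_le[OF assms(1) g g_int _ assms(2), of c \<gamma>0 x y] \<gamma>0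
        unfolding S_def C_def by auto
    qed (auto simp: S_def C psi_alpha_def)
  qed
qed

end
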